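(* For every integer $n\geq 3$, $$\sum_{\substack{k+l+m=n\\ k,l,m\geq 1}}\frac{\bar B_{2k}\bar B_{2l}\bar B_{2m}}{(2k)(2l)(2m)}=\frac{3}{2n}\sum_{\substack{k+l+m=n\\ k,l,m\geq 1}}\frac{B_{2k}B_{2l}\bar B_{2m}}{(2k)(2l)}\binom{2n}{2k,2l,2m}+\frac3n H_{2n}\sum_{k=1}^{n-1}\binom{2n}{2k}\frac{B_{2k}\bar B_{2n-2k}}{2k}$$ $$+\frac{3}{2n^2}\sum_{k=1}^{n-1}\binom{2n}{2k}\frac{B_{2k}}{2k}\big(B_{2n-2k}-\bar B_{2n-2k}\big)+\frac{3}{2n^2}H_{2n-1}\big(B_{2n}-\bar B_{2n}\big)+6H_{2n,2}\frac{\bar B_{2n}}{2n}-\frac{2n-1}{4}\bar B_{2n-2}.$$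
   Context: $B_n$ denotes the Bernoulli numbers, defined by $\frac{x}{e^x-1}=\sum_{n\ge 0}B_n\frac{x^n}{n!}$. $\bar B_n:=\frac{1-2^{n-1}}{2^{n-1}}B_n$. $H_i=\sum_{j=1}^i\frac1j$ is the $i$-th harmonic number, and $H_{2n,2}:=\sum_{1\le i<j\le 2n}\frac{1}{ij}$. $\binom{2n}{2k,2l,2m}=\frac{(2n)!}{(2k)!(2l)!(2m)!}$ is the multinomial coefficient. *)

theory Defs
  imports "HOL-Analysis.Analysis" "HOL-Computational_Algebra.Formal_Power_Series"
begin

definition bernoulli :: "nat \<Rightarrow> real" where
  "bernoulli n = fact n * fps_nth (fps_X / (fps_exp 1 - 1)) n"

text \<open>bar B_n = (1 - 2^(n-1)) / 2^(n-1) * B_n (only used for n >= 1).\<close>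
definition bernoulli_bar :: "nat \<Rightarrow> real" where
  "bernoulli_bar n = (1 - 2 ^ (n - 1)) / 2 ^ (n - 1) * bernoulli n"

definition harm2 :: "nat \<Rightarrow> real" where
  "harm2 m = (\<Sum>(i, j) \<in> {(i, j). 1 \<le> i \<and> i < j \<and> j \<le> m}. 1 / (real i * real j))"

definition multinom3 :: "nat \<Rightarrow> nat \<Rightarrow> nat \<Rightarrow> nat \<Rightarrow> real" where
  "multinom3 N a b c = fact N / (fact a * fact b * fact c)"

definition triples :: "nat \<Rightarrow> (nat \<times> nat \<times> nat) set" where
  "triples n = {(k, l, m). 1 \<le> k \<and> 1 \<le> l \<and> 1 \<le> m \<and> k + l + m = n}"

end

theory Submission
  imports Defs "HOL-Computational_Algebra.Polynomial" "HOL-Combinatorics.Stirling"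
begin

unbundle no vec_syntax
unbundle fps_syntax

text \<open>
  Let \<open>\<sigma>(x) = x / (2 sinh (x/2))\<close>, whose coefficients are \<open>bar B_k / k!\<close>, let
  \<open>U(x) = (1 - e^(-x)) / x\<close> and \<open>L = ln U = \<Sum>_n B_n x^n / (n n!)\<close>. For natural \<open>m\<close> the series
  \<open>G_m(x) = \<Sum>_N m^(N) [x^N] (\<sigma> U^m) x^N\<close> (\<open>rising_coeff_fps m\<close>), with rising factorials
  \<open>m^(N)\<close>, satisfies \<open>G_(m+1) (1 + (m + 1/2) x) = G_m\<close>. Hence \<open>G_m = \<Prod>_(j<m) 1 / (1 + (j + 1/2) x)\<close>,
  so that \<open>G_m' = \<Lambda>(m)' G_m\<close> for a series \<open>\<Lambda>(s)\<close> (\<open>lambda_fps s\<close>) whose coefficients are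
  polynomials in \<open>s\<close>. The coefficients of \<open>G_m\<close> are polynomials in \<open>m\<close> as well, so \<open>G = exp \<Lambda>\<close>
  holds identically in \<open>s\<close>.

  The theorem compares the coefficients of \<open>s^3 x^(2n)\<close>. Expanding the rising factorial by
  Stirling numbers of the first kind produces \<open>H_(2n-1)\<close>, \<open>H_(2n-1,2)\<close> and \<open>[x^(2n)] \<sigma> L^j\<close>
  for \<open>j \<le> 2\<close>, which are convolutions of Bernoulli numbers because \<open>\<sigma>\<close> and \<open>L + x/2\<close> are even.
  On the other side, the coefficient of \<open>s\<close> in \<open>\<Lambda>(s)\<close> is \<open>\<Sum>_k bar B_(2k) x^(2k) / (2k)\<close>; its
  cube gives the left-hand side, and the coefficient of \<open>s^3\<close> in \<open>\<Lambda>(s)\<close> the last term.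
\<close>

section \<open>Power series, polynomials and finite sums\<close>

lemma fps_ode_unique:
  fixes f g h :: "'a::field_char_0 fps"
  assumes "fps_deriv f = h * f" "fps_deriv g = h * g" "f $ 0 = g $ 0"
  shows "f = g"
proof -
  have "f $ n = g $ n" for n
  proof (induction n rule: less_induct)
    case (less n)
    show ?case
    proof (cases n)
      case (Suc k)
      have "of_nat (Suc k) * f $ Suc k = (h * f) $ k"
        using arg_cong[OF assms(1), of "\<lambda>f. f $ k"] by simp
      also have "\<dots> = (h * g) $ k"
        unfolding fps_mult_nth using less Suc by (intro sum.cong) auto
      also have "\<dots> = of_nat (Suc k) * g $ Suc k"
        using arg_cong[OF assms(2), of "\<lambda>f. f $ k"] by simp
      finally show ?thesis
        using Suc by (simp del: of_nat_Suc)
    qed (use assms in simp)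
  qed
  then show ?thesis
    by (simp add: fps_eq_iff)
qed

lemma fps_eq_if_deriv_eq:
  fixes f g :: "'a::{idom, semiring_char_0} fps"
  assumes "fps_deriv f = fps_deriv g" "f $ 0 = g $ 0"
  shows "f = g"
  using assms fps_deriv_eq_iff[of f g] by simp

lemma fps_mult_exp_compose_nth:
  fixes f g :: "'a::field_char_0 fps"
  assumes "g $ 0 = 0"
  shows "(f * (fps_exp c oo g)) $ n = (\<Sum>j\<le>n. c ^ j / fact j * (f * g ^ j) $ n)"
proof -
  have exp_g: "(fps_exp c oo g) $ k = (\<Sum>j\<le>n. c ^ j / fact j * (g ^ j) $ k)" if "k \<le> n" for k
  proof -
    have "(fps_exp c oo g) $ k = (\<Sum>j=0..k. c ^ j / fact j * (g ^ j) $ k)"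
      by (simp add: fps_compose_nth)
    also have "\<dots> = (\<Sum>j\<le>n. c ^ j / fact j * (g ^ j) $ k)"
      using that startsby_zero_power_prefix[OF assms]
      by (intro sum.mono_neutral_left) (auto simp: atLeast0AtMost)
    finally show ?thesis .
  qed
  have "(f * (fps_exp c oo g)) $ n = (\<Sum>i=0..n. \<Sum>j\<le>n. c ^ j / fact j * (f $ i * (g ^ j) $ (n - i)))"
    unfolding fps_mult_nth by (intro sum.cong refl) (simp add: exp_g sum_distrib_left ac_simps)
  also have "\<dots> = (\<Sum>j\<le>n. c ^ j / fact j * (f * g ^ j) $ n)"
    by (subst sum.swap) (simp add: fps_mult_nth sum_distrib_left)
  finally show ?thesis .
qed

definition fps_even :: "'a::zero fps \<Rightarrow> bool" where
  "fps_even f \<longleftrightarrow> (\<forall>k. odd k \<longrightarrow> f $ k = 0)"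

definition fps_even_coeffs :: "'a fps \<Rightarrow> 'a fps" where
  "fps_even_coeffs f = Abs_fps (\<lambda>k. f $ (2 * k))"

lemma fps_even_coeffs_nth [simp]: "fps_even_coeffs f $ k = f $ (2 * k)"
  by (simp add: fps_even_coeffs_def)

lemma fps_compose_X_power_2_nth:
  "((f :: 'a::comm_ring_1 fps) oo fps_X ^ 2) $ m = (if even m then f $ (m div 2) else 0)"
proof -
  have "(f oo fps_X ^ 2) $ m = (\<Sum>i=0..m. if i = m div 2 then (if even m then f $ i else 0) else 0)"
    unfolding fps_compose_nth
    by (intro sum.cong refl) (auto simp flip: power_mult simp: mult.commute)
  then show ?thesis
    by simp
qed

lemma fps_even_compose_X_power_2: "fps_even ((f :: 'a::comm_ring_1 fps) oo fps_X ^ 2)"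
  by (simp add: fps_even_def fps_compose_X_power_2_nth)

lemma fps_even_coeffs_compose_X_power_2:
  "fps_even_coeffs ((f :: 'a::comm_ring_1 fps) oo fps_X ^ 2) = f"
  by (simp add: fps_eq_iff fps_compose_X_power_2_nth)

lemma fps_even_coeffs_compose_X_power_2_eq:
  "fps_even (f :: 'a::comm_ring_1 fps) \<Longrightarrow> fps_even_coeffs f oo fps_X ^ 2 = f"
  by (auto simp: fps_eq_iff fps_compose_X_power_2_nth fps_even_def)

lemma fps_even_mult:
  fixes f g :: "'a::idom fps"
  assumes "fps_even f" "fps_even g"
  shows "fps_even (f * g)" "fps_even_coeffs (f * g) = fps_even_coeffs f * fps_even_coeffs g"
proof -
  have "f * g = (fps_even_coeffs f * fps_even_coeffs g) oo fps_X ^ 2"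
    using assms by (simp add: fps_compose_mult_distrib fps_even_coeffs_compose_X_power_2_eq)
  then show "fps_even (f * g)" "fps_even_coeffs (f * g) = fps_even_coeffs f * fps_even_coeffs g"
    by (simp_all add: fps_even_compose_X_power_2 fps_even_coeffs_compose_X_power_2)
qed

lemma fps_even_mult_nth:
  fixes f g :: "'a::idom fps"
  assumes "fps_even f" "fps_even g"
  shows "(f * g) $ (2 * n) = (\<Sum>i=0..n. f $ (2 * i) * g $ (2 * (n - i)))"
  using arg_cong[OF fps_even_mult(2)[OF assms], of "\<lambda>h. h $ n"] by (simp add: fps_mult_nth)

lemma fps_even_if_compose_uminus:
  assumes "(f :: 'a::field_char_0 fps) oo - fps_X = f"
  shows "fps_even f"
  unfolding fps_even_def
proof (intro allI impI)
  fix k :: nat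
  assume "odd k"
  with arg_cong[OF assms, of "\<lambda>f. f $ k"] show "f $ k = 0"
    by (simp add: fps_compose_uminus')
qed

definition weak_triples :: "nat \<Rightarrow> (nat \<times> nat \<times> nat) set" where
  "weak_triples n = {(i, j, k). i + j + k = n}"

lemma finite_weak_triples: "finite (weak_triples n)"
  by (rule finite_subset[of _ "{0..n} \<times> {0..n} \<times> {0..n}"]) (auto simp: weak_triples_def)

lemma fps_mult3_nth:
  "((f :: 'a::comm_semiring_1 fps) * g * h) $ n = (\<Sum>(i, j, k)\<in>weak_triples n. f $ i * g $ j * h $ k)"
proof -
  have "(f * g * h) $ n = (\<Sum>s=0..n. \<Sum>i=0..s. f $ i * g $ (s - i) * h $ (n - s))"
    unfolding fps_mult_nth[of "f * g"] fps_mult_nth[of f g] by (simp add: sum_distrib_right)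
  also have "\<dots> = (\<Sum>(s, i)\<in>Sigma {0..n} (\<lambda>s. {0..s}). f $ i * g $ (s - i) * h $ (n - s))"
    by (rule sum.Sigma) auto
  also have "\<dots> = (\<Sum>(i, j, k)\<in>weak_triples n. f $ i * g $ j * h $ k)"
    by (rule sum.reindex_bij_witness[where i = "\<lambda>(i, j, k). (i + j, i)" and j = "\<lambda>(s, i). (i, s - i, n - s)"])
       (auto simp: weak_triples_def)
  finally show ?thesis .
qed

lemma sum_weak_triples_eq:
  fixes G :: "nat \<times> nat \<times> nat \<Rightarrow> 'a::comm_monoid_add"
  assumes "\<And>j k. G (0, j, k) = 0" "\<And>i k. G (i, 0, k) = 0"
  shows "(\<Sum>x\<in>weak_triples n. G x) = (\<Sum>x\<in>triples n. G x) + (\<Sum>i=1..n-1. G (i, n - i, 0))"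
proof -
  let ?I = "(\<lambda>i. (i, n - i, 0)) ` {1..n-1}"
  have "triples n \<union> ?I \<subseteq> weak_triples n"
    by (auto simp: triples_def weak_triples_def)
  moreover have "G x = 0" if "x \<in> weak_triples n - (triples n \<union> ?I)" for x
  proof -
    obtain i j k where x: "x = (i, j, k)"
      by (cases x)
    have "i = 0 \<or> j = 0"
    proof (rule ccontr)
      assume "\<not> (i = 0 \<or> j = 0)"
      then have "x \<in> triples n \<union> ?I"
        using that x by (cases "k = 0") (auto simp: triples_def weak_triples_def image_iff)
      with that show False
        by blast
    qed
    then show ?thesis
      using assms x by auto
  qed
  ultimately have "(\<Sum>x\<in>weak_triples n. G x) = (\<Sum>x\<in>triples n \<union> ?I. G x)"
    by (intro sum.mono_neutral_right finite_weak_triples) auto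
  also have "\<dots> = (\<Sum>x\<in>triples n. G x) + (\<Sum>x\<in>?I. G x)"
    using \<open>triples n \<union> ?I \<subseteq> weak_triples n\<close>
    by (intro sum.union_disjoint) (auto simp: triples_def intro: finite_subset[OF _ finite_weak_triples])
  also have "(\<Sum>x\<in>?I. G x) = (\<Sum>i=1..n-1. G (i, n - i, 0))"
    by (subst sum.reindex) (auto simp: inj_on_def)
  finally show ?thesis .
qed

lemma sum_atLeast0_atMost_split_ends:
  fixes f :: "nat \<Rightarrow> 'a::comm_monoid_add"
  assumes "n \<ge> 1"
  shows "(\<Sum>i=0..n. f i) = f 0 + (\<Sum>i=1..n-1. f i) + f n"
proof -
  obtain m where m: "n = Suc m"
    using assms by (cases n) auto
  have "(\<Sum>i=0..Suc m. f i) = (\<Sum>i=0..m. f i) + f (Suc m)"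
    by (rule sum.atLeast0_atMost_Suc)
  also have "(\<Sum>i=0..m. f i) = f 0 + (\<Sum>i=Suc 0..m. f i)"
    by (rule sum.atLeast_Suc_atMost) simp
  finally show ?thesis
    using m by simp
qed

lemma fact_eq_of_nat_mult_fact_pred: "n \<ge> 1 \<Longrightarrow> (fact n :: real) = of_nat n * fact (n - 1)"
  by (cases n) simp_all

lemma poly_eq_0_if_zero_at_nats:
  fixes p :: "'a::{idom, ring_char_0} poly"
  assumes "\<And>m. poly p (of_nat m) = 0"
  shows "p = 0"
proof (rule ccontr)
  assume "p \<noteq> 0"
  then have "finite {x. poly p x = 0}"
    by (rule poly_roots_finite)
  moreover have "range (of_nat :: nat \<Rightarrow> 'a) \<subseteq> {x. poly p x = 0}"
    using assms by auto
  moreover have "infinite (range (of_nat :: nat \<Rightarrow> 'a))"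
    by (rule range_inj_infinite) (simp add: inj_on_def)
  ultimately show False
    using finite_subset by blast
qed

lemma coeff_pochhammer_X: "coeff (pochhammer [:0, 1:] N) k = (of_nat (stirling N k) :: 'a::comm_ring_1)"
proof -
  have "pochhammer [:0, 1:] N = (\<Sum>j\<le>N. monom (of_nat (stirling N j) :: 'a) j)"
    by (simp add: monom_altdef of_nat_poly flip: stirling_pochhammer)
  then show ?thesis
    by (cases "k \<le> N") (simp_all add: coeff_sum)
qed

lemma harm2_Suc: "harm2 (Suc m) = harm2 m + harm m / real (Suc m)"
proof -
  let ?A = "{(i, j). 1 \<le> i \<and> i < j \<and> j \<le> m}"
  let ?B = "(\<lambda>i. (i, Suc m)) ` {1..m}"
  have "finite ?A"
    by (rule finite_subset[of _ "{1..m} \<times> {1..m}"]) auto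
  have "{(i, j). 1 \<le> i \<and> i < j \<and> j \<le> Suc m} = ?A \<union> ?B"
    by (auto simp: le_Suc_eq)
  then have "harm2 (Suc m) = (\<Sum>(i, j)\<in>?A \<union> ?B. 1 / (real i * real j))"
    by (simp add: harm2_def)
  also have "\<dots> = harm2 m + (\<Sum>(i, j)\<in>?B. 1 / (real i * real j))"
    unfolding harm2_def by (rule sum.union_disjoint) (use \<open>finite ?A\<close> in auto)
  also have "(\<Sum>(i, j)\<in>?B. 1 / (real i * real j)) = harm m / real (Suc m)"
    by (subst sum.reindex) (auto simp: inj_on_def harm_def sum_distrib_right divide_inverse)
  finally show ?thesis .
qed

lemma of_nat_stirling_Suc_2: "real (stirling (Suc n) 2) = fact n * harm n"
  by (cases n) (simp_all add: of_nat_stirling_Suc_n_2 harm_def divide_inverse del: stirling.simps)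

lemma of_nat_stirling_Suc_3: "real (stirling (Suc n) 3) = fact n * harm2 n"
proof (induction n)
  case 0
  have empty: "{(i, j). 1 \<le> i \<and> i < j \<and> j \<le> (0::nat)} = {}"
    by auto
  show ?case
    unfolding harm2_def empty by simp
next
  case (Suc n)
  have "stirling (Suc (Suc n)) 3 = Suc n * stirling (Suc n) 3 + stirling (Suc n) 2"
    by (simp add: numeral_3_eq_3 numeral_2_eq_2)
  then show ?case
    by (simp add: Suc.IH of_nat_stirling_Suc_2 harm2_Suc field_simps del: stirling.simps)
qed

section \<open>Generating functions of Bernoulli numbers\<close>

text \<open>The series \<open>(e^(c x) - 1) / (c x)\<close>, which is \<open>1\<close> for \<open>c = 0\<close>.\<close>
definition expm1_quot :: "real \<Rightarrow> real fps" where
  "expm1_quot c = Abs_fps (\<lambda>n. c ^ n / fact (Suc n))"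

lemma expm1_quot_nth_0 [simp]: "expm1_quot c $ 0 = 1"
  by (simp add: expm1_quot_def)

lemma expm1_quot_neq_0 [simp]: "expm1_quot c \<noteq> 0"
  by (metis expm1_quot_nth_0 fps_zero_nth zero_neq_one)

lemma expm1_quot_0 [simp]: "expm1_quot 0 = 1"
  by (simp add: expm1_quot_def fps_eq_iff)

lemma const_X_mult_expm1_quot: "fps_const c * fps_X * expm1_quot c = fps_exp c - 1"
proof (rule fps_ext)
  fix n
  show "(fps_const c * fps_X * expm1_quot c) $ n = (fps_exp c - 1) $ n"
    by (cases n) (simp_all add: mult.assoc expm1_quot_def fps_X_mult_nth del: fact_Suc)
qed

lemma expm1_quot_compose_linear:
  "expm1_quot c oo (fps_const d * fps_X) = expm1_quot (d * c)"
  by (simp add: fps_compose_linear expm1_quot_def fps_eq_iff power_mult_distrib)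

lemma exp_mult_expm1_quot_neg: "fps_exp c * expm1_quot (-c) = expm1_quot c"
proof (cases "c = 0")
  case False
  have "fps_const c * fps_X * (fps_exp c * expm1_quot (-c))
      = - (fps_exp c * (fps_const (-c) * fps_X * expm1_quot (-c)))"
    by (simp add: ac_simps flip: fps_const_neg)
  also have "\<dots> = - (fps_exp c * (fps_exp (-c) - 1))"
    by (simp only: const_X_mult_expm1_quot)
  also have "\<dots> = fps_exp c - 1"
    by (simp add: algebra_simps flip: fps_exp_add_mult)
  also have "\<dots> = fps_const c * fps_X * expm1_quot c"
    by (simp only: const_X_mult_expm1_quot)
  finally show ?thesis
    using False by simp
qed simp

lemma fps_X_mult_deriv_expm1_quot:
  "fps_X * fps_deriv (expm1_quot c) = fps_exp c - expm1_quot c"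
proof (cases "c = 0")
  case False
  have "fps_const c * (expm1_quot c + fps_X * fps_deriv (expm1_quot c))
      = fps_deriv (fps_const c * fps_X * expm1_quot c)"
    by (simp add: algebra_simps)
  also have "\<dots> = fps_const c * fps_exp c"
    by (simp add: const_X_mult_expm1_quot)
  finally have "expm1_quot c + fps_X * fps_deriv (expm1_quot c) = fps_exp c"
    using False by simp
  then show ?thesis
    by (metis add_diff_cancel_left')
qed simp

definition bernoulli_fps :: "real fps" where
  "bernoulli_fps = inverse (expm1_quot 1)"

lemma bernoulli_fps_mult_expm1_quot: "bernoulli_fps * expm1_quot 1 = 1"
  by (simp add: bernoulli_fps_def inverse_mult_eq_1)

lemma bernoulli_eq_fact_mult_nth: "bernoulli n = fact n * bernoulli_fps $ n"
proof -
  have denom: "fps_exp 1 - 1 = fps_X * expm1_quot 1"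
    using const_X_mult_expm1_quot[of 1] by simp
  have "(fps_X * expm1_quot 1) * bernoulli_fps = fps_X"
    by (simp add: mult.assoc mult.commute[of _ bernoulli_fps] bernoulli_fps_mult_expm1_quot)
  then have "fps_X / (fps_exp 1 - 1) = bernoulli_fps"
    unfolding denom by (metis nonzero_mult_div_cancel_left expm1_quot_neq_0 fps_X_neq_zero mult_eq_0_iff)
  then show ?thesis
    by (simp add: bernoulli_def)
qed

lemma bernoulli_fps_compose_linear:
  "bernoulli_fps oo (fps_const c * fps_X) = inverse (expm1_quot c)"
  by (simp add: bernoulli_fps_def fps_inverse_compose expm1_quot_compose_linear)

text \<open>The series \<open>x / (2 sinh (x/2))\<close>. Its \<open>k\<close>-th coefficient is \<open>bernoulli_bar k / k!\<close>
  for \<open>k \<ge> 1\<close> but \<open>1\<close> for \<open>k = 0\<close>, where the definition of \<open>bernoulli_bar\<close> gives \<open>0\<close>.\<close>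
definition bernoulli_bar_fps :: "real fps" where
  "bernoulli_bar_fps = fps_exp (1/2) * bernoulli_fps"

lemma bernoulli_bar_fps_nth_0 [simp]: "bernoulli_bar_fps $ 0 = 1"
  by (simp add: bernoulli_bar_fps_def bernoulli_fps_def)

lemma bernoulli_bar_fps_mult_expm1_quot: "bernoulli_bar_fps * expm1_quot 1 = fps_exp (1/2)"
  by (simp add: bernoulli_bar_fps_def mult.assoc bernoulli_fps_mult_expm1_quot)

lemma bernoulli_bar_fps_mult_expm1_quot_neg: "bernoulli_bar_fps * expm1_quot (-1) = fps_exp (-1/2)"
proof -
  have "expm1_quot (-1) = fps_exp (-1) * expm1_quot 1"
    using exp_mult_expm1_quot_neg[of "-1"] by simp
  then have "bernoulli_bar_fps * expm1_quot (-1) = fps_exp (-1) * (bernoulli_bar_fps * expm1_quot 1)"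
    by (simp add: ac_simps)
  also have "\<dots> = fps_exp (-1) * fps_exp (1/2)"
    by (simp only: bernoulli_bar_fps_mult_expm1_quot)
  also have "\<dots> = fps_exp (-1/2)"
    by (simp flip: fps_exp_add_mult)
  finally show ?thesis .
qed

lemma bernoulli_bar_fps_eq: "bernoulli_bar_fps = 2 * (bernoulli_fps oo (fps_const (1/2) * fps_X)) - bernoulli_fps"
proof -
  let ?Bh = "inverse (expm1_quot (1/2))"
  have halve: "fps_const (1/2) * (2 * f) = f" for f :: "real fps"
    by (simp add: numeral_fps_const flip: mult.assoc)
  have "fps_X * ((fps_exp (1/2) + 1) * expm1_quot (1/2))
      = 2 * ((fps_exp (1/2) + 1) * (fps_const (1/2) * fps_X * expm1_quot (1/2)))"
    by (subst halve[symmetric]) (simp only: ac_simps)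
  also have "\<dots> = 2 * ((fps_exp (1/2) + 1) * (fps_exp (1/2) - 1))"
    by (simp only: const_X_mult_expm1_quot)
  also have "\<dots> = 2 * (fps_exp 1 - 1)"
    by (simp add: algebra_simps flip: fps_exp_add_mult)
  also have "\<dots> = fps_X * (2 * expm1_quot 1)"
    using const_X_mult_expm1_quot[of 1] by (simp add: mult.left_commute[of fps_X])
  finally have half: "(fps_exp (1/2) + 1) * expm1_quot (1/2) = 2 * expm1_quot 1"
    by simp
  have "(fps_exp (1/2) + 1) * bernoulli_fps
      = (fps_exp (1/2) + 1) * bernoulli_fps * (expm1_quot (1/2) * ?Bh)"
    by (simp add: inverse_mult_eq_1')
  also have "\<dots> = ((fps_exp (1/2) + 1) * expm1_quot (1/2)) * bernoulli_fps * ?Bh"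
    by (simp only: ac_simps)
  also have "\<dots> = 2 * (bernoulli_fps * expm1_quot 1) * ?Bh"
    unfolding half by (simp only: ac_simps)
  finally have "(fps_exp (1/2) + 1) * bernoulli_fps = 2 * ?Bh"
    by (simp add: bernoulli_fps_mult_expm1_quot)
  then show ?thesis
    unfolding bernoulli_bar_fps_def bernoulli_fps_compose_linear by (simp add: distrib_right eq_diff_eq)
qed

lemma bernoulli_bar_fps_nth: "bernoulli_bar_fps $ k = (2 * (1/2) ^ k - 1) * bernoulli_fps $ k"
proof -
  have "(bernoulli_fps oo (fps_const (1/2) * fps_X)) $ k = (1/2) ^ k * bernoulli_fps $ k"
    by (rule fps_nth_compose_linear)
  then show ?thesis
    by (simp add: bernoulli_bar_fps_eq numeral_fps_const left_diff_distrib)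
qed

lemma bernoulli_bar_eq_fact_mult_nth:
  assumes "k \<ge> 1"
  shows "bernoulli_bar k = fact k * bernoulli_bar_fps $ k"
proof -
  have "(2::real) ^ k = 2 ^ (k - 1) * 2"
    using assms by (simp flip: power_Suc2)
  then have "(1 - 2 ^ (k - 1)) / 2 ^ (k - 1) = (2 * (1/2) ^ k - 1 :: real)"
    by (simp add: field_simps power_one_over)
  then show ?thesis
    by (simp add: bernoulli_bar_def bernoulli_bar_fps_nth bernoulli_eq_fact_mult_nth)
qed

lemma fps_even_bernoulli_bar_fps: "fps_even bernoulli_bar_fps"
proof (rule fps_even_if_compose_uminus)
  have "bernoulli_fps oo - fps_X = inverse (fps_exp (-1) * expm1_quot 1)"
    using bernoulli_fps_compose_linear[of "-1"] exp_mult_expm1_quot_neg[of "-1"]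
    by (simp flip: fps_const_neg)
  also have "\<dots> = fps_exp 1 * bernoulli_fps"
    by (simp add: fps_inverse_mult bernoulli_fps_def flip: fps_exp_neg)
  finally show "bernoulli_bar_fps oo - fps_X = bernoulli_bar_fps"
    by (simp add: bernoulli_bar_fps_def fps_compose_mult_distrib mult.assoc flip: fps_exp_add_mult)
qed

lemma bernoulli_bar_fps_nth_even:
  "k \<ge> 1 \<Longrightarrow> bernoulli_bar_fps $ (2 * k) = bernoulli_bar (2 * k) / fact (2 * k)"
  by (simp add: bernoulli_bar_eq_fact_mult_nth)

lemma bernoulli_odd_eq_0:
  assumes "odd k" "k \<noteq> 1"
  shows "bernoulli k = 0"
proof -
  have "(1/2 :: real) ^ k \<le> (1/2) ^ 2"
    using assms by (intro power_decreasing) (auto elim: oddE)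
  then have "2 * (1/2 :: real) ^ k - 1 \<noteq> 0"
    by (auto simp: power2_eq_square)
  moreover have "bernoulli_bar_fps $ k = 0"
    using fps_even_bernoulli_bar_fps assms(1) by (simp add: fps_even_def)
  ultimately show ?thesis
    by (simp add: bernoulli_bar_fps_nth bernoulli_eq_fact_mult_nth)
qed

lemma bernoulli_1: "bernoulli 1 = -1/2"
proof -
  have "(bernoulli_fps * expm1_quot 1) $ 1 = 0"
    by (simp add: bernoulli_fps_mult_expm1_quot)
  then show ?thesis
    by (simp add: bernoulli_eq_fact_mult_nth fps_mult_nth bernoulli_fps_def expm1_quot_def)
qed

text \<open>The logarithm of \<open>(1 - e^(-x)) / x\<close>; the coefficient at \<open>n = 0\<close> is \<open>0\<close> because \<open>x / 0 = 0\<close>.\<close>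
definition bernoulli_log_fps :: "real fps" where
  "bernoulli_log_fps = Abs_fps (\<lambda>n. bernoulli n / (of_nat n * fact n))"

lemma bernoulli_log_fps_nth_0 [simp]: "bernoulli_log_fps $ 0 = 0"
  by (simp add: bernoulli_log_fps_def)

lemma fps_X_mult_deriv_bernoulli_log_fps: "fps_X * fps_deriv bernoulli_log_fps = bernoulli_fps - 1"
proof (rule fps_ext)
  fix n
  show "(fps_X * fps_deriv bernoulli_log_fps) $ n = (bernoulli_fps - 1) $ n"
    by (cases n) (simp_all add: fps_X_mult_nth bernoulli_log_fps_def bernoulli_eq_fact_mult_nth
        bernoulli_fps_def del: of_nat_Suc)
qed

lemma deriv_expm1_quot_neg: "fps_deriv (expm1_quot (-1)) = expm1_quot (-1) * fps_deriv bernoulli_log_fps"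
proof -
  have "fps_X * (expm1_quot (-1) * fps_deriv bernoulli_log_fps)
      = expm1_quot (-1) * (fps_X * fps_deriv bernoulli_log_fps)"
    by (simp only: ac_simps)
  also have "\<dots> = fps_exp (-1) * (bernoulli_fps * expm1_quot 1) - expm1_quot (-1)"
    by (simp add: fps_X_mult_deriv_bernoulli_log_fps algebra_simps
        flip: exp_mult_expm1_quot_neg[of "-1", simplified])
  also have "\<dots> = fps_X * fps_deriv (expm1_quot (-1))"
    by (simp add: bernoulli_fps_mult_expm1_quot fps_X_mult_deriv_expm1_quot)
  finally show ?thesis
    by simp
qed

lemma exp_compose_bernoulli_log_fps: "fps_exp (of_nat m) oo bernoulli_log_fps = expm1_quot (-1) ^ m"
proof (rule fps_ode_unique)
  show "fps_deriv (fps_exp (of_nat m) oo bernoulli_log_fps)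
      = (fps_const (of_nat m) * fps_deriv bernoulli_log_fps) * (fps_exp (of_nat m) oo bernoulli_log_fps)"
    by (simp add: fps_compose_deriv ac_simps flip: fps_const_mult_apply_left)
  show "fps_deriv (expm1_quot (-1) ^ m)
      = (fps_const (of_nat m) * fps_deriv bernoulli_log_fps) * expm1_quot (-1) ^ m"
  proof (cases m)
    case (Suc k)
    show ?thesis
      unfolding Suc fps_deriv_power deriv_expm1_quot_neg diff_Suc_1 by (simp only: power_Suc ac_simps)
  qed simp
qed (simp add: fps_power_zeroth)

text \<open>\<open>bernoulli_log_fps + x/2 = ln (sinh (x/2) / (x/2))\<close> is even.\<close>
definition bernoulli_log_even_fps :: "real fps" where
  "bernoulli_log_even_fps = bernoulli_log_fps + fps_const (1/2) * fps_X"

lemma bernoulli_log_even_fps_nth: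
  "bernoulli_log_even_fps $ k = (if even k then bernoulli k / (of_nat k * fact k) else 0)"
proof (cases "k = 1")
  case False
  then show ?thesis
    by (auto simp: bernoulli_log_even_fps_def bernoulli_log_fps_def bernoulli_odd_eq_0)
qed (use bernoulli_1 in \<open>simp add: bernoulli_log_even_fps_def bernoulli_log_fps_def\<close>)

lemma fps_even_bernoulli_log_even_fps: "fps_even bernoulli_log_even_fps"
  by (simp add: fps_even_def bernoulli_log_even_fps_nth)

lemma fact_mult_bernoulli_log_even_fps_nth:
  assumes "k \<le> n"
  shows "fact (2 * n) * bernoulli_log_even_fps $ (2 * k) / fact (2 * (n - k))
    = real ((2 * n) choose (2 * k)) * bernoulli (2 * k) / real (2 * k)"
proof -
  have "real ((2 * n) choose (2 * k)) = fact (2 * n) / (fact (2 * k) * fact (2 * (n - k)))"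
    using assms by (subst binomial_fact) (auto simp: diff_mult_distrib2)
  then show ?thesis
    by (simp add: bernoulli_log_even_fps_nth)
qed

lemma bernoulli_log_fps_power_2:
  "bernoulli_log_fps ^ 2
     = bernoulli_log_even_fps ^ 2 - fps_X * bernoulli_log_even_fps + fps_const (1/4) * fps_X ^ 2"
proof -
  let ?l = bernoulli_log_even_fps
  have two: "2 * fps_const (1/2) = (1 :: real fps)"
    by (simp add: numeral_fps_const)
  have L: "bernoulli_log_fps = ?l - fps_const (1/2) * fps_X"
    by (simp add: bernoulli_log_even_fps_def)
  have "bernoulli_log_fps ^ 2 = ?l ^ 2 - 2 * fps_const (1/2) * fps_X * ?l + (fps_const (1/2) * fps_X) ^ 2"
    unfolding L by (simp add: power2_diff algebra_simps)
  also have "\<dots> = ?l ^ 2 - fps_X * ?l + fps_const (1/4) * fps_X ^ 2"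
    unfolding two by (simp add: power_mult_distrib power2_eq_square ac_simps)
  finally show ?thesis .
qed

section \<open>An exponential formula in the parameter m\<close>

definition lambda_poly :: "nat \<Rightarrow> real poly" where
  "lambda_poly n = (if n = 0 then 0 else
     (\<Sum>a=1..n+1. monom ((-1) ^ n * fact (n - 1) * bernoulli_bar_fps $ (n + 1 - a) / fact a) a))"

lemma coeff_lambda_poly:
  "coeff (lambda_poly n) a = (if n \<ge> 1 \<and> 1 \<le> a \<and> a \<le> n + 1
     then (-1) ^ n * fact (n - 1) * bernoulli_bar_fps $ (n + 1 - a) / fact a else 0)"
  by (auto simp: lambda_poly_def coeff_sum)

lemma poly_lambda_poly:
  assumes "n \<ge> 1"
  shows "poly (lambda_poly n) s = (-1) ^ n * fact (n - 1) * (bernoulli_bar_fps * (fps_exp s - 1)) $ (n + 1)"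
proof -
  have "(bernoulli_bar_fps * (fps_exp s - 1)) $ (n + 1)
      = (\<Sum>a=0..n+1. (fps_exp s - 1) $ a * bernoulli_bar_fps $ (n + 1 - a))"
    by (subst mult.commute) (rule fps_mult_nth)
  also have "\<dots> = (\<Sum>a=1..n+1. s ^ a / fact a * bernoulli_bar_fps $ (n + 1 - a))"
    by (subst sum.atLeast_Suc_atMost) auto
  finally have expand: "(bernoulli_bar_fps * (fps_exp s - 1)) $ (n + 1)
      = (\<Sum>a=1..n+1. s ^ a / fact a * bernoulli_bar_fps $ (n + 1 - a))" .
  have "poly (lambda_poly n) s
      = (\<Sum>a=1..n+1. (-1) ^ n * fact (n - 1) * (s ^ a / fact a * bernoulli_bar_fps $ (n + 1 - a)))"
    using assms by (simp add: lambda_poly_def poly_sum poly_monom ac_simps)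
  then show ?thesis
    by (simp only: expand sum_distrib_left)
qed

lemma lambda_poly_diff:
  assumes "n \<ge> 1"
  shows "of_nat n * (poly (lambda_poly n) (s + 1) - poly (lambda_poly n) s) = (-1) ^ n * (s + 1/2) ^ n"
proof -
  have "bernoulli_bar_fps * (fps_exp (s + 1) - 1) - bernoulli_bar_fps * (fps_exp s - 1)
      = fps_exp s * (bernoulli_bar_fps * (fps_exp 1 - 1))"
    by (simp add: fps_exp_add_mult algebra_simps)
  also have "\<dots> = fps_X * (fps_exp s * (bernoulli_bar_fps * expm1_quot 1))"
    using const_X_mult_expm1_quot[of 1] by (simp add: ac_simps)
  also have "\<dots> = fps_X * fps_exp (s + 1/2)"
    by (simp add: bernoulli_bar_fps_mult_expm1_quot fps_exp_add_mult)
  finally have eq: "bernoulli_bar_fps * (fps_exp (s + 1) - 1) - bernoulli_bar_fps * (fps_exp s - 1)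
      = fps_X * fps_exp (s + 1/2)" .
  have "(bernoulli_bar_fps * (fps_exp (s + 1) - 1)) $ (n + 1) - (bernoulli_bar_fps * (fps_exp s - 1)) $ (n + 1)
      = (fps_X * fps_exp (s + 1/2)) $ (n + 1)"
    unfolding eq[symmetric] by simp
  also have "\<dots> = (s + 1/2) ^ n / fact n"
    by (simp add: fps_X_mult_nth)
  finally have diff: "(bernoulli_bar_fps * (fps_exp (s + 1) - 1)) $ (n + 1)
      - (bernoulli_bar_fps * (fps_exp s - 1)) $ (n + 1) = (s + 1/2) ^ n / fact n" .
  have "poly (lambda_poly n) (s + 1) - poly (lambda_poly n) s = (-1) ^ n * fact (n - 1) * ((s + 1/2) ^ n / fact n)"
    unfolding poly_lambda_poly[OF assms] diff[symmetric] by (simp only: right_diff_distrib)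
  moreover have "fact n = of_nat n * (fact (n - 1) :: real)"
    using assms by (rule fact_eq_of_nat_mult_fact_pred)
  ultimately show ?thesis
    using assms by (simp add: field_simps)
qed

definition lambda_fps :: "real \<Rightarrow> real fps" where
  "lambda_fps s = Abs_fps (\<lambda>n. poly (lambda_poly n) s)"

text \<open>\<open>lambda_fps (s + 1) - lambda_fps s\<close> is, up to a constant, \<open>- ln (1 + (s + 1/2) x)\<close>.\<close>
lemma deriv_lambda_fps_diff:
  "(fps_deriv (lambda_fps (s + 1)) - fps_deriv (lambda_fps s)) * (1 + fps_const (s + 1/2) * fps_X)
     = - fps_const (s + 1/2)"
proof -
  define d where "d = fps_deriv (lambda_fps (s + 1)) - fps_deriv (lambda_fps s)"
  have d: "d $ k = (-1) ^ (k + 1) * (s + 1/2) ^ (k + 1)" for k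
    using lambda_poly_diff[of "k + 1" s] by (simp add: d_def lambda_fps_def algebra_simps)
  have "(d * (1 + fps_const (s + 1/2) * fps_X)) $ N = (- fps_const (s + 1/2)) $ N" for N
    by (cases N) (simp_all add: d distrib_left mult.left_commute[of _ "fps_const _"] fps_X_mult_nth)
  then show ?thesis
    by (simp add: fps_eq_iff d_def)
qed

definition rising_coeff_poly :: "nat \<Rightarrow> real poly" where
  "rising_coeff_poly N = pochhammer [:0, 1:] N *
     (\<Sum>j\<le>N. monom ((bernoulli_bar_fps * bernoulli_log_fps ^ j) $ N / fact j) j)"

lemma poly_rising_coeff_poly:
  "poly (rising_coeff_poly N) (of_nat m)
     = pochhammer (of_nat m) N * (bernoulli_bar_fps * expm1_quot (-1) ^ m) $ N"
proof -
  have "poly (pochhammer [:0, 1:] N) x = pochhammer x N" for x :: real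
    by (induction N) (simp_all add: pochhammer_Suc)
  then show ?thesis
    by (simp add: rising_coeff_poly_def poly_sum poly_monom fps_mult_exp_compose_nth ac_simps
        flip: exp_compose_bernoulli_log_fps)
qed

definition rising_coeff_fps :: "nat \<Rightarrow> real fps" where
  "rising_coeff_fps m = Abs_fps (\<lambda>N. poly (rising_coeff_poly N) (of_nat m))"

lemma rising_coeff_fps_nth:
  "rising_coeff_fps m $ N = pochhammer (of_nat m) N * (bernoulli_bar_fps * expm1_quot (-1) ^ m) $ N"
  by (simp add: rising_coeff_fps_def poly_rising_coeff_poly)

lemma rising_coeff_fps_0: "rising_coeff_fps 0 = 1"
proof (rule fps_ext)
  fix N
  show "rising_coeff_fps 0 $ N = 1 $ N"
    using poly_rising_coeff_poly[of N 0] by (simp add: rising_coeff_fps_def pochhammer_0_left)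
qed

text \<open>Coefficientwise form of a first-order differential equation for
  \<open>bernoulli_bar_fps * expm1_quot (-1) ^ Suc m = e^(-x/2) ((1 - e^(-x)) / x)^m\<close>.\<close>
lemma bernoulli_bar_expm1_quot_power_nth_rec:
  defines "c \<equiv> \<lambda>m. bernoulli_bar_fps * expm1_quot (-1) ^ m"
  shows "(of_nat N + 1 + of_nat m) * c (Suc m) $ Suc N + (of_nat m + 1/2) * c (Suc m) $ N
      = of_nat m * c m $ Suc N"
proof -
  let ?U = "expm1_quot (-1)" and ?E = "fps_exp (-1/2) :: real fps"
  have c_Suc: "c (Suc m) = ?E * ?U ^ m"
    by (simp add: c_def bernoulli_bar_fps_mult_expm1_quot_neg flip: mult.assoc)
  have m_c: "fps_const (of_nat m) * c m = fps_const (of_nat m) * (?E * ?U ^ (m - 1))"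
    by (cases m) (simp_all add: c_def bernoulli_bar_fps_mult_expm1_quot_neg flip: mult.assoc)
  have "fps_exp (-1) - 1 = - (fps_X * ?U)"
    using const_X_mult_expm1_quot[of "-1"] by (metis fps_const_neg fps_const_1_eq_1 mult_minus1 mult.assoc)
  then have XU: "fps_X * fps_deriv ?U = 1 - fps_X * ?U - ?U"
    by (simp add: fps_X_mult_deriv_expm1_quot algebra_simps)
  define P where "P = fps_const (of_nat m) * ?U ^ (m - 1)"
  have PU: "?E * (P * ?U) = fps_const (of_nat m) * c (Suc m)"
  proof -
    have "P * ?U = fps_const (of_nat m) * ?U ^ m"
      unfolding P_def by (cases m) simp_all
    then show ?thesis
      by (simp add: c_Suc ac_simps)
  qed
  have EP: "?E * P = fps_const (of_nat m) * c m"
    by (simp add: P_def m_c mult.left_commute)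
  have "fps_X * fps_deriv (c (Suc m))
      = fps_const (-1/2) * (fps_X * c (Suc m)) + ?E * (P * (fps_X * fps_deriv ?U))"
    unfolding c_Suc P_def by (simp add: fps_deriv_power algebra_simps)
  also have "?E * (P * (fps_X * fps_deriv ?U)) = ?E * P - fps_X * (?E * (P * ?U)) - ?E * (P * ?U)"
    unfolding XU by (simp add: algebra_simps)
  finally have "fps_X * fps_deriv (c (Suc m)) = fps_const (-1/2) * (fps_X * c (Suc m))
      + (fps_const (of_nat m) * c m - fps_X * (fps_const (of_nat m) * c (Suc m))
      - fps_const (of_nat m) * c (Suc m))"
    unfolding PU EP .
  from arg_cong[OF this, of "\<lambda>f. f $ Suc N"] show ?thesis
    by (simp add: algebra_simps)
qed

lemma rising_coeff_fps_Suc: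
  "rising_coeff_fps (Suc m) * (1 + fps_const (of_nat m + 1/2) * fps_X) = rising_coeff_fps m"
proof (rule fps_ext)
  fix N
  let ?c = "\<lambda>m. bernoulli_bar_fps * expm1_quot (-1) ^ m"
  show "(rising_coeff_fps (Suc m) * (1 + fps_const (of_nat m + 1/2) * fps_X)) $ N = rising_coeff_fps m $ N"
  proof (cases N)
    case 0
    then show ?thesis
      by (simp add: rising_coeff_fps_nth fps_power_zeroth)
  next
    case (Suc N')
    have "(rising_coeff_fps (Suc m) * (1 + fps_const (of_nat m + 1/2) * fps_X)) $ N
        = pochhammer (of_nat m + 1) N'
          * ((of_nat N' + 1 + of_nat m) * ?c (Suc m) $ Suc N' + (of_nat m + 1/2) * ?c (Suc m) $ N')"
      using Suc by (simp add: rising_coeff_fps_nth distrib_left mult.left_commute[of _ "fps_const _"]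
          fps_X_mult_nth pochhammer_Suc algebra_simps)
    also have "\<dots> = pochhammer (of_nat m + 1) N' * (of_nat m * ?c m $ Suc N')"
      by (simp only: bernoulli_bar_expm1_quot_power_nth_rec)
    also have "\<dots> = rising_coeff_fps m $ N"
      using Suc by (simp add: rising_coeff_fps_nth pochhammer_rec)
    finally show ?thesis .
  qed
qed

lemma deriv_rising_coeff_fps:
  "fps_deriv (rising_coeff_fps m) = fps_deriv (lambda_fps (of_nat m)) * rising_coeff_fps m"
proof (induction m)
  case 0
  have "lambda_fps 0 = 0"
    by (simp add: fps_eq_iff lambda_fps_def poly_0_coeff_0 coeff_lambda_poly)
  then show ?case
    by (simp add: rising_coeff_fps_0)
next
  case (Suc m)
  define a where "a = of_nat m + (1/2 :: real)"
  define Q where "Q = 1 + fps_const a * fps_X"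
  have "Q $ 0 = 1"
    by (simp add: Q_def)
  then have "Q \<noteq> 0"
    by auto
  have GQ: "rising_coeff_fps (Suc m) * Q = rising_coeff_fps m"
    unfolding Q_def a_def by (rule rising_coeff_fps_Suc)
  have step: "fps_deriv (lambda_fps (of_nat (Suc m))) * Q = fps_deriv (lambda_fps (of_nat m)) * Q - fps_const a"
    using deriv_lambda_fps_diff[of "of_nat m"] unfolding Q_def a_def by (simp add: algebra_simps)
  have "fps_deriv (rising_coeff_fps (Suc m)) * Q
      = fps_deriv (rising_coeff_fps m) - rising_coeff_fps (Suc m) * fps_const a"
    unfolding GQ[symmetric] by (simp add: Q_def)
  also have "\<dots> = fps_deriv (lambda_fps (of_nat m)) * (rising_coeff_fps (Suc m) * Q)
      - rising_coeff_fps (Suc m) * fps_const a"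
    by (simp add: Suc.IH GQ)
  also have "\<dots> = (fps_deriv (lambda_fps (of_nat m)) * Q - fps_const a) * rising_coeff_fps (Suc m)"
    by (simp add: algebra_simps)
  also have "\<dots> = fps_deriv (lambda_fps (of_nat (Suc m))) * rising_coeff_fps (Suc m) * Q"
    unfolding step[symmetric] by (simp add: ac_simps)
  finally show ?case
    using \<open>Q \<noteq> 0\<close> by simp
qed

text \<open>The differential equation of \<open>rising_coeff_fps m\<close> holds at every natural \<open>m\<close>, hence as an
  identity of polynomials in \<open>m\<close>.\<close>
lemma rising_coeff_poly_Suc:
  "smult (of_nat (Suc N)) (rising_coeff_poly (Suc N))
     = (\<Sum>i=0..N. smult (of_nat (Suc i)) (lambda_poly (Suc i)) * rising_coeff_poly (N - i))"
proof -
  have "poly (smult (of_nat (Suc N)) (rising_coeff_poly (Suc N))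
        - (\<Sum>i=0..N. smult (of_nat (Suc i)) (lambda_poly (Suc i)) * rising_coeff_poly (N - i))) (of_nat m) = 0"
    for m
  proof -
    have "fps_deriv (rising_coeff_fps m) $ N = (fps_deriv (lambda_fps (of_nat m)) * rising_coeff_fps m) $ N"
      by (simp only: deriv_rising_coeff_fps)
    then have "of_nat (Suc N) * poly (rising_coeff_poly (Suc N)) (of_nat m)
        = (\<Sum>i=0..N. of_nat (Suc i) * poly (lambda_poly (Suc i)) (of_nat m)
             * poly (rising_coeff_poly (N - i)) (of_nat m))"
      by (simp add: rising_coeff_fps_def lambda_fps_def fps_mult_nth)
    then show ?thesis
      by (simp add: poly_sum mult.assoc)
  qed
  then have "smult (of_nat (Suc N)) (rising_coeff_poly (Suc N))
        - (\<Sum>i=0..N. smult (of_nat (Suc i)) (lambda_poly (Suc i)) * rising_coeff_poly (N - i)) = 0"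
    by (rule poly_eq_0_if_zero_at_nats)
  then show ?thesis
    by simp
qed

section \<open>Two evaluations of a coefficient\<close>

definition lambda_slice :: "nat \<Rightarrow> real fps" where
  "lambda_slice a = Abs_fps (\<lambda>n. coeff (lambda_poly n) a)"

definition rising_slice :: "nat \<Rightarrow> real fps" where
  "rising_slice j = Abs_fps (\<lambda>N. coeff (rising_coeff_poly N) j)"

lemma lambda_slice_0: "lambda_slice 0 = 0"
  by (simp add: fps_eq_iff lambda_slice_def coeff_lambda_poly)

lemma lambda_slice_nth_0 [simp]: "lambda_slice a $ 0 = 0"
  by (simp add: lambda_slice_def lambda_poly_def)

lemma rising_slice_nth_0 [simp]: "rising_slice j $ 0 = (if j = 0 then 1 else 0)"
  by (cases j) (simp_all add: rising_slice_def rising_coeff_poly_def monom_0 one_pCons)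

lemma deriv_rising_slice:
  "fps_deriv (rising_slice j) = (\<Sum>a=0..j. fps_deriv (lambda_slice a) * rising_slice (j - a))"
proof (rule fps_ext)
  fix N
  have "fps_deriv (rising_slice j) $ N = coeff (smult (of_nat (Suc N)) (rising_coeff_poly (Suc N))) j"
    by (simp add: rising_slice_def)
  also have "\<dots> = (\<Sum>i=0..N. \<Sum>a=0..j.
      of_nat (Suc i) * coeff (lambda_poly (Suc i)) a * coeff (rising_coeff_poly (N - i)) (j - a))"
    unfolding rising_coeff_poly_Suc
    by (simp add: coeff_sum coeff_mult mult_smult_left sum_distrib_left atLeast0AtMost mult.assoc)
  also have "\<dots> = (\<Sum>a=0..j. fps_deriv (lambda_slice a) * rising_slice (j - a)) $ N"
    by (subst sum.swap) (simp add: fps_sum_nth fps_mult_nth lambda_slice_def rising_slice_def)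
  finally show "fps_deriv (rising_slice j) $ N = (\<Sum>a=0..j. fps_deriv (lambda_slice a) * rising_slice (j - a)) $ N" .
qed

lemma rising_slice_0: "rising_slice 0 = 1"
  by (rule fps_eq_if_deriv_eq) (simp_all add: deriv_rising_slice lambda_slice_0)

lemma rising_slice_1: "rising_slice 1 = lambda_slice 1"
  by (rule fps_eq_if_deriv_eq) (simp_all add: deriv_rising_slice lambda_slice_0 rising_slice_0)

lemma rising_slice_2: "rising_slice 2 = fps_const (1/2) * lambda_slice 1 ^ 2 + lambda_slice 2"
proof (rule fps_eq_if_deriv_eq)
  have "{0..2::nat} = {0, 1, 2}"
    by auto
  then show "fps_deriv (rising_slice 2) = fps_deriv (fps_const (1/2) * lambda_slice 1 ^ 2 + lambda_slice 2)"
    by (simp add: deriv_rising_slice lambda_slice_0 rising_slice_0 rising_slice_1[simplified]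
        fps_deriv_power power2_eq_square)
qed (simp add: fps_power_zeroth)

text \<open>The coefficient of \<open>s^3\<close> in \<open>exp (\<Sum>a. s^a lambda_slice a)\<close>.\<close>
lemma rising_slice_3:
  "rising_slice 3 = fps_const (1/6) * lambda_slice 1 ^ 3 + lambda_slice 1 * lambda_slice 2 + lambda_slice 3"
proof (rule fps_eq_if_deriv_eq)
  have "{0..3::nat} = {0, 1, 2, 3}"
    by auto
  then have "fps_deriv (rising_slice 3) = fps_deriv (lambda_slice 1) * rising_slice 2
      + fps_deriv (lambda_slice 2) * rising_slice 1 + fps_deriv (lambda_slice 3)"
    by (simp add: deriv_rising_slice lambda_slice_0 rising_slice_0 add.assoc)
  also have "\<dots> = fps_deriv (fps_const (1/6) * lambda_slice 1 ^ 3 + lambda_slice 1 * lambda_slice 2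
      + lambda_slice 3)"
  proof -
    have cube: "fps_deriv (fps_const (1/6) * f ^ 3) = fps_const (1/2) * (fps_deriv f * f ^ 2)"
      for f :: "real fps"
      by (simp add: fps_deriv_power flip: mult.assoc)
    show ?thesis
      unfolding rising_slice_1 rising_slice_2 fps_deriv_add cube fps_deriv_mult
      by (simp add: fps_deriv_power algebra_simps power2_eq_square)
  qed
  finally show "fps_deriv (rising_slice 3) = fps_deriv (fps_const (1/6) * lambda_slice 1 ^ 3
      + lambda_slice 1 * lambda_slice 2 + lambda_slice 3)" .
qed (simp add: fps_power_zeroth)

lemma lambda_slice_1_nth: "lambda_slice 1 $ k = (if k = 0 then 0 else (-1) ^ k * fact (k - 1) * bernoulli_bar_fps $ k)"
  by (simp add: lambda_slice_def coeff_lambda_poly)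

lemma fps_even_lambda_slice_1: "fps_even (lambda_slice 1)"
  using fps_even_bernoulli_bar_fps by (simp add: fps_even_def lambda_slice_1_nth del: One_nat_def)

lemma lambda_slice_1_nth_even: "lambda_slice 1 $ (2 * k) = bernoulli_bar (2 * k) / real (2 * k)"
proof (cases "k = 0")
  case False
  then have "(fact (2 * k) :: real) = real (2 * k) * fact (2 * k - 1)"
    by (intro fact_eq_of_nat_mult_fact_pred) simp
  then show ?thesis
    using False by (simp add: lambda_slice_1_nth bernoulli_bar_fps_nth_even del: One_nat_def)
qed (simp add: lambda_slice_1_nth)

lemma lambda_slice_1_cube_nth:
  "(lambda_slice 1 ^ 3) $ (2 * n) = (\<Sum>(k, l, m)\<in>triples n.
     bernoulli_bar (2*k) * bernoulli_bar (2*l) * bernoulli_bar (2*m) / (real (2*k) * real (2*l) * real (2*m)))"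
proof -
  let ?E = "fps_even_coeffs (lambda_slice 1)"
  have "fps_even_coeffs (lambda_slice 1 ^ 3) = ?E * ?E * ?E"
    using fps_even_mult[OF fps_even_lambda_slice_1 fps_even_lambda_slice_1]
      fps_even_mult[OF _ fps_even_lambda_slice_1, of "lambda_slice 1 * lambda_slice 1"]
    by (simp add: power3_eq_cube del: One_nat_def)
  then have "(lambda_slice 1 ^ 3) $ (2 * n) = (?E * ?E * ?E) $ n"
    by (metis fps_even_coeffs_nth)
  also have "\<dots> = (\<Sum>(i, j, k)\<in>weak_triples n. ?E $ i * ?E $ j * ?E $ k)"
    by (rule fps_mult3_nth)
  also have "\<dots> = (\<Sum>(i, j, k)\<in>triples n. ?E $ i * ?E $ j * ?E $ k)"
    by (subst sum_weak_triples_eq) (simp_all add: lambda_slice_1_nth del: One_nat_def)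
  finally show ?thesis
    by (simp add: lambda_slice_1_nth_even del: One_nat_def)
qed

lemma lambda_slice_1_mult_2_nth_even: "(lambda_slice 1 * lambda_slice 2) $ (2 * n) = 0"
proof -
  have zero: "lambda_slice 1 $ i * lambda_slice 2 $ (2 * n - i) = 0" for i
  proof (cases "even i")
    case True
    then have "2 * n - i = 0 \<or> odd (2 * n - i - 1)"
      by presburger
    then show ?thesis
      using fps_even_bernoulli_bar_fps
      by (auto simp: lambda_slice_def coeff_lambda_poly fps_even_def)
  qed (use fps_even_lambda_slice_1 in \<open>simp add: fps_even_def\<close>)
  show ?thesis
    unfolding fps_mult_nth by (intro sum.neutral ballI zero)
qed

lemma lambda_slice_3_nth_even:
  assumes "n \<ge> 2"
  shows "lambda_slice 3 $ (2 * n) = real (2 * n - 1) * bernoulli_bar (2 * n - 2) / 6"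
proof -
  have "(fact (2 * n - 1) :: real) = real (2 * n - 1) * fact (2 * n - 2)"
    using fact_eq_of_nat_mult_fact_pred[of "2 * n - 1"] assms by (simp add: numeral_2_eq_2)
  moreover have "bernoulli_bar (2 * n - 2) = fact (2 * n - 2) * bernoulli_bar_fps $ (2 * n - 2)"
    using assms by (intro bernoulli_bar_eq_fact_mult_nth) simp
  moreover have "2 * n + 1 - 3 = 2 * n - 2" "fact 3 = (6 :: real)"
    by (simp_all add: numeral_3_eq_3)
  ultimately show ?thesis
    using assms by (simp add: lambda_slice_def coeff_lambda_poly)
qed

lemma coeff_rising_coeff_poly_3_even_slices:
  assumes "n \<ge> 2"
  shows "6 * coeff (rising_coeff_poly (2 * n)) 3
    = (\<Sum>(k, l, m)\<in>triples n.
         bernoulli_bar (2*k) * bernoulli_bar (2*l) * bernoulli_bar (2*m) / (real (2*k) * real (2*l) * real (2*m)))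
      + real (2 * n - 1) * bernoulli_bar (2 * n - 2)"
  using arg_cong[OF rising_slice_3, of "\<lambda>f. f $ (2 * n)"] assms
  by (simp add: rising_slice_def lambda_slice_1_cube_nth lambda_slice_1_mult_2_nth_even
      lambda_slice_3_nth_even del: One_nat_def)

lemma coeff_rising_coeff_poly_3:
  assumes "N \<ge> 3"
  defines "v \<equiv> \<lambda>j. (bernoulli_bar_fps * bernoulli_log_fps ^ j) $ N"
  shows "coeff (rising_coeff_poly N) 3 = fact (N - 1) * (v 2 / 2 + harm (N - 1) * v 1 + harm2 (N - 1) * v 0)"
proof -
  obtain K where K: "N = Suc K"
    using assms by (cases N) auto
  have "{..3::nat} = {0, 1, 2, 3}"
    by auto
  then show ?thesis
    using assms unfolding rising_coeff_poly_def coeff_mult coeff_pochhammer_X K v_def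
    by (simp add: coeff_sum stirling_Suc_n_1 of_nat_stirling_Suc_2 of_nat_stirling_Suc_3 algebra_simps
        del: stirling.simps)
qed

lemma bernoulli_bar_fps_mult_bernoulli_log_fps_nth_even:
  assumes "n \<ge> 1"
  shows "fact (2 * n) * (bernoulli_bar_fps * bernoulli_log_fps) $ (2 * n)
    = (\<Sum>k=1..n-1. real ((2*n) choose (2*k)) * bernoulli (2*k) * bernoulli_bar (2*n - 2*k) / real (2*k))
      + bernoulli (2 * n) / real (2 * n)"
proof -
  let ?l = bernoulli_log_even_fps and ?s = bernoulli_bar_fps
  have "?s * bernoulli_log_fps = ?l * ?s - fps_const (1/2) * (fps_X * ?s)"
    by (simp add: bernoulli_log_even_fps_def algebra_simps)
  moreover have "(fps_X * ?s) $ (2 * n) = 0"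
    using assms fps_even_bernoulli_bar_fps by (simp add: fps_even_def)
  ultimately have "(?s * bernoulli_log_fps) $ (2 * n) = (\<Sum>i=0..n. ?l $ (2 * i) * ?s $ (2 * (n - i)))"
    by (simp add: fps_even_mult_nth fps_even_bernoulli_log_even_fps fps_even_bernoulli_bar_fps)
  also have "\<dots> = (\<Sum>i=1..n-1. ?l $ (2 * i) * ?s $ (2 * (n - i))) + ?l $ (2 * n)"
    using assms by (simp add: sum_atLeast0_atMost_split_ends bernoulli_log_even_fps_nth)
  finally have "fact (2 * n) * (?s * bernoulli_log_fps) $ (2 * n)
      = (\<Sum>i=1..n-1. fact (2 * n) * (?l $ (2 * i) * ?s $ (2 * (n - i)))) + fact (2 * n) * ?l $ (2 * n)"
    by (simp add: sum_distrib_left distrib_left)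
  also have "(\<Sum>i=1..n-1. fact (2 * n) * (?l $ (2 * i) * ?s $ (2 * (n - i))))
      = (\<Sum>k=1..n-1. real ((2*n) choose (2*k)) * bernoulli (2*k) * bernoulli_bar (2*n - 2*k) / real (2*k))"
  proof (intro sum.cong refl)
    fix k
    assume k: "k \<in> {1..n-1}"
    have "fact (2 * n) * ?l $ (2 * k) / fact (2 * (n - k))
        = real ((2 * n) choose (2 * k)) * bernoulli (2 * k) / real (2 * k)"
      using k by (intro fact_mult_bernoulli_log_even_fps_nth) auto
    moreover have "?s $ (2 * (n - k)) = bernoulli_bar (2 * (n - k)) / fact (2 * (n - k))"
      using k by (intro bernoulli_bar_fps_nth_even) auto
    ultimately have "fact (2 * n) * (?l $ (2 * k) * ?s $ (2 * (n - k)))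
        = real ((2 * n) choose (2 * k)) * bernoulli (2 * k) / real (2 * k) * bernoulli_bar (2 * (n - k))"
      by (metis (no_types) times_divide_eq_left times_divide_eq_right mult.assoc)
    then show "fact (2 * n) * (?l $ (2 * k) * ?s $ (2 * (n - k)))
        = real ((2*n) choose (2*k)) * bernoulli (2*k) * bernoulli_bar (2*n - 2*k) / real (2*k)"
      by (simp add: diff_mult_distrib2)
  qed
  finally show ?thesis
    using assms by (simp add: bernoulli_log_even_fps_nth)
qed

lemma bernoulli_bar_fps_mult_bernoulli_log_fps_power_2_nth_even_coeffs:
  assumes "n \<ge> 1"
  shows "(bernoulli_bar_fps * bernoulli_log_fps ^ 2) $ (2 * n)
    = (\<Sum>(i, j, k)\<in>triples n. bernoulli_log_even_fps $ (2 * i) * bernoulli_log_even_fps $ (2 * j)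
          * bernoulli_bar_fps $ (2 * k))
      + (\<Sum>i=1..n-1. bernoulli_log_even_fps $ (2 * i) * bernoulli_log_even_fps $ (2 * (n - i)))
      + bernoulli_bar_fps $ (2 * n - 2) / 4"
proof -
  let ?l = bernoulli_log_even_fps and ?s = bernoulli_bar_fps
  let ?El = "fps_even_coeffs ?l" and ?Es = "fps_even_coeffs ?s"
  have even_ll: "fps_even (?l * ?l)" and even_ls: "fps_even (?l * ?s)"
    using fps_even_mult fps_even_bernoulli_log_even_fps fps_even_bernoulli_bar_fps by blast+
  have "?s * bernoulli_log_fps ^ 2 = ?l * ?l * ?s - fps_X * (?l * ?s) + fps_const (1/4) * (fps_X ^ 2 * ?s)"
    unfolding bernoulli_log_fps_power_2 by (simp add: power2_eq_square algebra_simps)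
  then have "(?s * bernoulli_log_fps ^ 2) $ (2 * n)
      = (?l * ?l * ?s) $ (2 * n) - (fps_X * (?l * ?s)) $ (2 * n) + 1/4 * (fps_X ^ 2 * ?s) $ (2 * n)"
    by (simp only: fps_add_nth fps_sub_nth fps_mult_left_const_nth)
  also have "(fps_X * (?l * ?s)) $ (2 * n) = 0"
    using assms even_ls by (simp add: fps_even_def)
  also have "(fps_X ^ 2 * ?s) $ (2 * n) = ?s $ (2 * n - 2)"
    using assms by (simp add: fps_X_power_mult_nth)
  also have "(?l * ?l * ?s) $ (2 * n) = (?El * ?El * ?Es) $ n"
    using fps_even_mult(2)[OF even_ll fps_even_bernoulli_bar_fps]
      fps_even_mult(2)[OF fps_even_bernoulli_log_even_fps fps_even_bernoulli_log_even_fps]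
    by (simp flip: fps_even_coeffs_nth)
  also have "\<dots> = (\<Sum>(i, j, k)\<in>weak_triples n. ?El $ i * ?El $ j * ?Es $ k)"
    by (rule fps_mult3_nth)
  also have "\<dots> = (\<Sum>(i, j, k)\<in>triples n. ?El $ i * ?El $ j * ?Es $ k) + (\<Sum>i=1..n-1. ?El $ i * ?El $ (n - i))"
    by (subst sum_weak_triples_eq) (simp_all add: bernoulli_log_even_fps_nth)
  finally show ?thesis
    by simp
qed

lemma bernoulli_bar_fps_mult_bernoulli_log_fps_power_2_nth_even:
  assumes "n \<ge> 2"
  shows "fact (2 * n) * (bernoulli_bar_fps * bernoulli_log_fps ^ 2) $ (2 * n)
    = (\<Sum>(k, l, m)\<in>triples n. bernoulli (2*k) * bernoulli (2*l) * bernoulli_bar (2*m)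
          / (real (2*k) * real (2*l)) * multinom3 (2*n) (2*k) (2*l) (2*m))
      + (\<Sum>k=1..n-1. real ((2*n) choose (2*k)) * bernoulli (2*k) * bernoulli (2*n - 2*k)
          / (real (2*k) * real (2*n - 2*k)))
      + real (2 * n) * real (2 * n - 1) * bernoulli_bar (2 * n - 2) / 4"
proof -
  let ?l = bernoulli_log_even_fps and ?s = bernoulli_bar_fps
  have "fact (2 * n) * (\<Sum>(i, j, k)\<in>triples n. ?l $ (2 * i) * ?l $ (2 * j) * ?s $ (2 * k))
      = (\<Sum>(k, l, m)\<in>triples n. bernoulli (2*k) * bernoulli (2*l) * bernoulli_bar (2*m)
          / (real (2*k) * real (2*l)) * multinom3 (2*n) (2*k) (2*l) (2*m))"
    unfolding sum_distrib_left
    by (intro sum.cong refl)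
       (auto simp: triples_def bernoulli_log_even_fps_nth bernoulli_bar_fps_nth_even multinom3_def; simp add: ac_simps)
  moreover have "fact (2 * n) * (\<Sum>i=1..n-1. ?l $ (2 * i) * ?l $ (2 * (n - i)))
      = (\<Sum>k=1..n-1. real ((2*n) choose (2*k)) * bernoulli (2*k) * bernoulli (2*n - 2*k)
          / (real (2*k) * real (2*n - 2*k)))"
    unfolding sum_distrib_left
  proof (intro sum.cong refl)
    fix k
    assume "k \<in> {1..n-1}"
    then have binom: "fact (2 * n) * ?l $ (2 * k) / fact (2 * (n - k))
        = real ((2 * n) choose (2 * k)) * bernoulli (2 * k) / real (2 * k)"
      by (intro fact_mult_bernoulli_log_even_fps_nth) auto
    have "fact (2 * n) * (?l $ (2 * k) * ?l $ (2 * (n - k)))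
        = fact (2 * n) * ?l $ (2 * k) / fact (2 * (n - k)) * (bernoulli (2 * (n - k)) / real (2 * (n - k)))"
      by (simp add: bernoulli_log_even_fps_nth ac_simps)
    then show "fact (2 * n) * (?l $ (2 * k) * ?l $ (2 * (n - k)))
        = real ((2*n) choose (2*k)) * bernoulli (2*k) * bernoulli (2*n - 2*k) / (real (2*k) * real (2*n - 2*k))"
      unfolding binom by (simp add: diff_mult_distrib2)
  qed
  moreover have "fact (2 * n) * ?s $ (2 * n - 2) = real (2 * n) * real (2 * n - 1) * bernoulli_bar (2 * n - 2)"
  proof -
    have "(fact (2 * n) :: real) = real (2 * n) * (real (2 * n - 1) * fact (2 * n - 2))"
      using assms fact_eq_of_nat_mult_fact_pred[of "2 * n"] fact_eq_of_nat_mult_fact_pred[of "2 * n - 1"]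
      by (simp add: numeral_2_eq_2)
    moreover have "bernoulli_bar (2 * n - 2) = fact (2 * n - 2) * ?s $ (2 * n - 2)"
      using assms by (intro bernoulli_bar_eq_fact_mult_nth) simp
    ultimately show ?thesis
      by simp
  qed
  ultimately show ?thesis
    using assms by (simp add: bernoulli_bar_fps_mult_bernoulli_log_fps_power_2_nth_even_coeffs distrib_left)
qed

lemma coeff_rising_coeff_poly_3_even_stirling:
  assumes "n \<ge> 2"
  shows "real (2 * n) * coeff (rising_coeff_poly (2 * n)) 3
    = ((\<Sum>(k, l, m)\<in>triples n. bernoulli (2*k) * bernoulli (2*l) * bernoulli_bar (2*m)
          / (real (2*k) * real (2*l)) * multinom3 (2*n) (2*k) (2*l) (2*m))
       + (\<Sum>k=1..n-1. real ((2*n) choose (2*k)) * bernoulli (2*k) * bernoulli (2*n - 2*k)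
          / (real (2*k) * real (2*n - 2*k)))
       + real (2 * n) * real (2 * n - 1) * bernoulli_bar (2 * n - 2) / 4) / 2
      + harm (2 * n - 1) * ((\<Sum>k=1..n-1. real ((2*n) choose (2*k)) * bernoulli (2*k)
          * bernoulli_bar (2*n - 2*k) / real (2*k)) + bernoulli (2 * n) / real (2 * n))
      + harm2 (2 * n - 1) * bernoulli_bar (2 * n)"
proof -
  let ?v = "\<lambda>j. (bernoulli_bar_fps * bernoulli_log_fps ^ j) $ (2 * n)"
  have "fact (2 * n) = real (2 * n) * (fact (2 * n - 1) :: real)"
    using assms by (intro fact_eq_of_nat_mult_fact_pred) simp
  then have "real (2 * n) * coeff (rising_coeff_poly (2 * n)) 3
      = fact (2 * n) * ?v 2 / 2 + harm (2 * n - 1) * (fact (2 * n) * ?v 1)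
        + harm2 (2 * n - 1) * (fact (2 * n) * ?v 0)"
    using assms by (simp add: coeff_rising_coeff_poly_3 algebra_simps)
  also have "fact (2 * n) * ?v 0 = bernoulli_bar (2 * n)"
    using assms by (simp add: bernoulli_bar_fps_nth_even)
  moreover have "n \<ge> 1"
    using assms by simp
  ultimately show ?thesis
    using assms by (simp only: power_one_right bernoulli_bar_fps_mult_bernoulli_log_fps_nth_even
        bernoulli_bar_fps_mult_bernoulli_log_fps_power_2_nth_even)
qed

lemma sum_binomial_bernoulli_symmetric:
  "real n * (\<Sum>k=1..n-1. real ((2*n) choose (2*k)) * bernoulli (2*k) * bernoulli (2*n - 2*k)
       / (real (2*k) * real (2*n - 2*k)))
   = (\<Sum>k=1..n-1. real ((2*n) choose (2*k)) * bernoulli (2*k) * bernoulli (2*n - 2*k) / real (2*k))"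
proof -
  let ?g = "\<lambda>k. real ((2*n) choose (2*k)) * bernoulli (2*k) * bernoulli (2*n - 2*k)"
  have g_reflect: "?g (n - k) = ?g k" if "k \<le> n" for k
  proof -
    have "2 * (n - k) = 2 * n - 2 * k" "2 * n - 2 * (n - k) = 2 * k"
      using that by simp_all
    then show ?thesis
      using binomial_symmetric[of "2 * k" "2 * n"] that by simp
  qed
  have "(\<Sum>k=1..n-1. ?g k / real (2*n - 2*k)) = (\<Sum>k=1..n-1. ?g (n - k) / real (2*n - 2*(n - k)))"
    by (rule sum.reindex_bij_witness[where i = "\<lambda>k. n - k" and j = "\<lambda>k. n - k"]) auto
  also have "\<dots> = (\<Sum>k=1..n-1. ?g k / real (2*k))"
  proof (intro sum.cong refl)
    fix k
    assume "k \<in> {1..n-1}"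
    then have "k \<le> n" "2 * n - 2 * (n - k) = 2 * k"
      by auto
    then show "?g (n - k) / real (2*n - 2*(n - k)) = ?g k / real (2*k)"
      by (subst g_reflect) simp_all
  qed
  finally have reflect: "(\<Sum>k=1..n-1. ?g k / real (2*n - 2*k)) = (\<Sum>k=1..n-1. ?g k / real (2*k))" .
  have "2 * real n * (\<Sum>k=1..n-1. ?g k / (real (2*k) * real (2*n - 2*k)))
      = (\<Sum>k=1..n-1. ?g k / real (2*n - 2*k)) + (\<Sum>k=1..n-1. ?g k / real (2*k))"
    unfolding sum_distrib_left sum.distrib[symmetric]
    by (intro sum.cong refl) (auto simp: field_simps of_nat_diff)
  then show ?thesis
    unfolding reflect by simp
qed

theorem theorem5p3:
  fixes n :: nat
  assumes "n \<ge> 3"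
  shows "(\<Sum>(k, l, m) \<in> triples n.
            bernoulli_bar (2*k) * bernoulli_bar (2*l) * bernoulli_bar (2*m)
            / (real (2*k) * real (2*l) * real (2*m)))
       = 3 / (2 * real n) * (\<Sum>(k, l, m) \<in> triples n.
            bernoulli (2*k) * bernoulli (2*l) * bernoulli_bar (2*m) / (real (2*k) * real (2*l))
            * multinom3 (2*n) (2*k) (2*l) (2*m))
       + 3 / real n * harm (2*n) * (\<Sum>k = 1..n-1.
            real ((2*n) choose (2*k)) * bernoulli (2*k) * bernoulli_bar (2*n - 2*k) / real (2*k))
       + 3 / (2 * real n ^ 2) * (\<Sum>k = 1..n-1.
            real ((2*n) choose (2*k)) * bernoulli (2*k) / real (2*k)
            * (bernoulli (2*n - 2*k) - bernoulli_bar (2*n - 2*k)))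
       + 3 / (2 * real n ^ 2) * harm (2*n - 1) * (bernoulli (2*n) - bernoulli_bar (2*n))
       + 6 * harm2 (2*n) * bernoulli_bar (2*n) / real (2*n)
       - real (2*n - 1) / 4 * bernoulli_bar (2*n - 2)"
  (is "?lhs = 3 / (2 * real n) * ?S1 + 3 / real n * harm (2*n) * ?S2 + 3 / (2 * real n ^ 2) * ?S3 + _ + _ - _")
proof -
  define Z where "Z = (\<Sum>k=1..n-1. real ((2*n) choose (2*k)) * bernoulli (2*k) * bernoulli (2*n - 2*k)
    / (real (2*k) * real (2*n - 2*k)))"
  have "real n * Z = ?S3 + ?S2"
    unfolding Z_def sum_binomial_bernoulli_symmetric sum.distrib[symmetric]
    by (intro sum.cong refl) (simp add: right_diff_distrib)
  then have Z: "Z = (?S3 + ?S2) / real n"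
    using assms by (simp add: field_simps)
  have "Suc (2*n - 1) = 2*n"
    using assms by simp
  then have harm: "harm (2*n) = harm (2*n - 1) + 1 / real (2*n)"
    and harm2: "harm2 (2*n) = harm2 (2*n - 1) + harm (2*n - 1) / real (2*n)"
    using harm_Suc[of "2*n - 1"] harm2_Suc[of "2*n - 1"] by (simp_all only: inverse_eq_divide)
  have "n \<ge> 2"
    using assms by simp
  have "?lhs = 3 / real n * (real (2*n) * coeff (rising_coeff_poly (2*n)) 3) - real (2*n - 1) * bernoulli_bar (2*n - 2)"
    using coeff_rising_coeff_poly_3_even_slices[of n] assms by simp
  also have "\<dots> = 3 / (2 * real n) * ?S1 + 3 / real n * harm (2*n) * ?S2 + 3 / (2 * real n ^ 2) * ?S3
       + 3 / (2 * real n ^ 2) * harm (2*n - 1) * (bernoulli (2*n) - bernoulli_bar (2*n))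
       + 6 * harm2 (2*n) * bernoulli_bar (2*n) / real (2*n)
       - real (2*n - 1) / 4 * bernoulli_bar (2*n - 2)"
    using assms unfolding coeff_rising_coeff_poly_3_even_stirling[OF \<open>n \<ge> 2\<close>, folded Z_def] Z harm harm2
    by (simp add: field_simps power2_eq_square)
  finally show ?thesis .
qed

end
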